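(* Let $\{(g^\omega,p^\omega):\omega\in\Omega\}$ be a family of mechanisms such that for all $\omega$ and all inputs, $g^\omega_{ij}\in[0,1]$, $\sum_i g^\omega_{ij}\le1$, $p^\omega_i\ge0$ and $p^\omega_i(b,x,y)\le\sum_j g^\omega_{ij}(b,x,y)b_{ij}$; let $\mathcal U$ and $\mathcal P$ be the induced utility and payment classes. Assume every bidder's valuation satisfies $v_i(S)=\sum_{j\in S}v_{ij}\le1$ for all $S\subseteq[m]$. Let $(v^{(l)},x^{(l)},y^{(l)})$, $l=1,\dots,L$, be i.i.d. samples from the distribution $\mathbb P$ of $(v,x,y)$. Let $\delta\in(0,1)$ and let $\epsilon>0$ satisfy $$\epsilon\ge\sqrt{\frac{9n^2}{2L}\Big(\log\frac4\delta+\max\Big\{\log\mathcal N_{\infty,1}\big(\mathcal P,\tfrac\epsilon3\big),\log\mathcal N_{\infty,1}\big(\mathcal U,\tfrac\epsilon6\big)\Big\}\Big)}.$$ Then with probability at least $1-\delta$, simultaneously for all $\omega\in\Omega$, $$\Big|\mathbb E\Big[\sum_{i=1}^np_i^\omega(v,x,y)\Big]-\frac1L\sum_{l=1}^L\sum_{i=1}^np_i^\omega(v^{(l)},x^{(l)},y^{(l)})\Big|\le\epsilon$$ and $$\Big|\mathbb E\Big[\sum_{i=1}^n reg_i^\omega(v,x,y)\Big]-\sum_{i=1}^n\widehat{reg}_i(\omega)\Big|\le\epsilon .$$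
   Context: Setup: $n$ bidders, $m$ items, bidder contexts $x\in\mathcal X^n$, item contexts $y\in\mathcal Y^m$, valuation/bid matrices $v\in\mathcal V^{n\times m}$, $\mathcal V\subseteq\mathbb R_{\ge0}$; $(v_i',v_{-i})$ is $v$ with row $i$ replaced by $v_i'$. A mechanism $(g^\omega,p^\omega)$ has $g^\omega:\mathcal V^{n\times m}\times\mathcal X^n\times\mathcal Y^m\to\mathbb R^{n\times m}$ and $p^\omega:\mathcal V^{n\times m}\times\mathcal X^n\times\mathcal Y^m\to\mathbb R^n$; utility $u^\omega_i(v_i,b,x,y)=\sum_jg^\omega_{ij}(b,x,y)v_{ij}-p^\omega_i(b,x,y)$; ex-post regret $reg^\omega_i(v,x,y)=\max_{b_i'\in\mathcal V^m}u^\omega_i(v_i,(b_i',v_{-i}),x,y)-u^\omega_i(v_i,v,x,y)$; empirical regret $\widehat{reg}_i(\omega)=\frac1L\sum_{l=1}^L reg_i^\omega(v^{(l)},x^{(l)},y^{(l)})$. $\mathcal U=\{u^\omega:\omega\in\Omega\}$, $\mathcal P=\{p^\omega:\omega\in\Omega\}$. Distances: $l_{\infty,1}(p,p')=\sup_{(v,x,y)}\sum_i|p_i(v,x,y)-p'_i(v,x,y)|$, $l_{\infty,1}(u,u')=\sup_{(v,v',x,y)}\sum_i|u_i(v_i,(v_i',v_{-i}),x,y)-u'_i(v_i,(v_i',v_{-i}),x,y)|$. $\mathcal N_{\infty,1}(\mathcal F,r)$ is the minimum number of open $l_{\infty,1}$-balls of radius $r$ centered at elements of $\mathcal F$ needed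 to cover $\mathcal F$ (assumed finite). Maxima are assumed attained and all functions measurable. *)

theory Defs
  imports "HOL-Probability.Probability"
begin

text \<open>Bidders are indexed by a finite type 'n (n = CARD('n)), items by a finite type 'm
 (m = CARD('m)). A valuation/bid matrix is a function 'n => 'm => real; row i is v i,
 and (v_i', v_{-i}) is v(i := v_i'). Bidder contexts are 'n => 'x, item contexts 'm => 'y.\<close>

definition mat_dom :: "real set \<Rightarrow> ('n \<Rightarrow> 'm \<Rightarrow> real) set" where
  "mat_dom V = {v. \<forall>i j. v i j \<in> V}"

definition row_dom :: "real set \<Rightarrow> ('m \<Rightarrow> real) set" where
  "row_dom V = {b. \<forall>j. b j \<in> V}"

definition util ::
  "('w \<Rightarrow> ('n \<Rightarrow> 'm \<Rightarrow> real) \<Rightarrow> ('n \<Rightarrow> 'x) \<Rightarrow> ('m \<Rightarrow> 'y) \<Rightarrow> 'n \<Rightarrow> 'm \<Rightarrow> real)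
   \<Rightarrow> ('w \<Rightarrow> ('n \<Rightarrow> 'm \<Rightarrow> real) \<Rightarrow> ('n \<Rightarrow> 'x) \<Rightarrow> ('m \<Rightarrow> 'y) \<Rightarrow> 'n \<Rightarrow> real)
   \<Rightarrow> 'w \<Rightarrow> 'n \<Rightarrow> ('m::finite \<Rightarrow> real) \<Rightarrow> ('n \<Rightarrow> 'm \<Rightarrow> real) \<Rightarrow> ('n \<Rightarrow> 'x) \<Rightarrow> ('m \<Rightarrow> 'y) \<Rightarrow> real"
  where
  "util g p w i vi b x y = (\<Sum>j\<in>UNIV. g w b x y i j * vi j) - p w b x y i"

text \<open>ex-post regret reg^w_i(v,x,y) (the max over misreports b_i' in V^m is written as a Sup;
 attainment is a hypothesis of the theorem)\<close>
definition regret ::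
  "real set
   \<Rightarrow> ('w \<Rightarrow> ('n \<Rightarrow> 'm \<Rightarrow> real) \<Rightarrow> ('n \<Rightarrow> 'x) \<Rightarrow> ('m \<Rightarrow> 'y) \<Rightarrow> 'n \<Rightarrow> 'm \<Rightarrow> real)
   \<Rightarrow> ('w \<Rightarrow> ('n \<Rightarrow> 'm \<Rightarrow> real) \<Rightarrow> ('n \<Rightarrow> 'x) \<Rightarrow> ('m \<Rightarrow> 'y) \<Rightarrow> 'n \<Rightarrow> real)
   \<Rightarrow> 'w \<Rightarrow> 'n \<Rightarrow> ('n \<Rightarrow> 'm::finite \<Rightarrow> real) \<Rightarrow> ('n \<Rightarrow> 'x) \<Rightarrow> ('m \<Rightarrow> 'y) \<Rightarrow> real"
  where
  "regret V g p w i v x y =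
     (SUP b'\<in>row_dom V. util g p w i (v i) (v(i := b')) x y) - util g p w i (v i) v x y"

definition dist_pay ::
  "real set \<Rightarrow> (('n \<Rightarrow> 'm \<Rightarrow> real) \<Rightarrow> ('n \<Rightarrow> 'x) \<Rightarrow> ('m \<Rightarrow> 'y) \<Rightarrow> 'n::finite \<Rightarrow> real)
   \<Rightarrow> (('n \<Rightarrow> 'm \<Rightarrow> real) \<Rightarrow> ('n \<Rightarrow> 'x) \<Rightarrow> ('m \<Rightarrow> 'y) \<Rightarrow> 'n \<Rightarrow> real) \<Rightarrow> ereal"
  where
  "dist_pay V q q' =
     (SUP (v, x, y) \<in> mat_dom V \<times> UNIV \<times> UNIV. ereal (\<Sum>i\<in>UNIV. \<bar>q v x y i - q' v x y i\<bar>))"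

definition dist_util ::
  "real set \<Rightarrow> ('n::finite \<Rightarrow> ('m \<Rightarrow> real) \<Rightarrow> ('n \<Rightarrow> 'm \<Rightarrow> real) \<Rightarrow> ('n \<Rightarrow> 'x) \<Rightarrow> ('m \<Rightarrow> 'y) \<Rightarrow> real)
   \<Rightarrow> ('n \<Rightarrow> ('m \<Rightarrow> real) \<Rightarrow> ('n \<Rightarrow> 'm \<Rightarrow> real) \<Rightarrow> ('n \<Rightarrow> 'x) \<Rightarrow> ('m \<Rightarrow> 'y) \<Rightarrow> real) \<Rightarrow> ereal"
  where
  "dist_util V u u' =
     (SUP (v, v', x, y) \<in> mat_dom V \<times> mat_dom V \<times> UNIV \<times> UNIV.
        ereal (\<Sum>i\<in>UNIV. \<bar>u i (v i) (v(i := v' i)) x y - u' i (v i) (v(i := v' i)) x y\<bar>))"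

definition is_cover :: "('f \<Rightarrow> 'f \<Rightarrow> ereal) \<Rightarrow> 'f set \<Rightarrow> real \<Rightarrow> 'f set \<Rightarrow> bool" where
  "is_cover d F r C \<longleftrightarrow> finite C \<and> C \<subseteq> F \<and> F \<subseteq> (\<Union>c\<in>C. {f\<in>F. d c f < ereal r})"

definition covering_number :: "('f \<Rightarrow> 'f \<Rightarrow> ereal) \<Rightarrow> 'f set \<Rightarrow> real \<Rightarrow> nat" where
  "covering_number d F r = (LEAST k. \<exists>C. is_cover d F r C \<and> card C = k)"

end

theory Submission
  imports Defs
begin

text \<open>For a single mechanism, the total payment and the total regret of a bidder profile are
  bounded by n (a bidder never pays or regrets more than her value for all items, which is at
  most 1), so Hoeffding's inequality controls their empirical means. A finite cover of the
  payment class at scale \<open>\<epsilon>/3\<close> and of the utility class at scale \<open>\<epsilon>/6\<close> reduces the uniform statement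
  to a union bound over the cover centres: payments move by at most the cover radius, and
  regrets by at most twice the radius, because a difference of two maxima is bounded by the
  difference of the functions at the larger maximiser. The sample-size condition makes the union
  bound over each cover at most \<open>\<delta>/2\<close>.\<close>

lemma indep_vars_PiM_components:
  fixes M :: "'a measure"
  assumes M: "prob_space M" and L: "L > (0::nat)"
  shows "prob_space.indep_vars (PiM {..<L} (\<lambda>_. M)) (\<lambda>_. M) (\<lambda>l S. S l) {..<L}"
proof -
  interpret P: prob_space "PiM {..<L} (\<lambda>_. M)"
    by (intro prob_space_PiM) (use M in auto)
  have ne: "{..<L} \<noteq> {}" using L by auto
  show ?thesis
  proof (subst P.indep_vars_iff_distr_eq_PiM'[OF ne])
    show "(\<lambda>S. S i) \<in> measurable (PiM {..<L} (\<lambda>_. M)) M" if "i \<in> {..<L}" for i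
      using that measurable_component_singleton[of i "{..<L}" "\<lambda>_. M"] by simp
    have "distr (PiM {..<L} (\<lambda>_. M)) (PiM {..<L} (\<lambda>_. M)) (\<lambda>x. \<lambda>i\<in>{..<L}. x i)
        = distr (PiM {..<L} (\<lambda>_. M)) (PiM {..<L} (\<lambda>_. M)) (\<lambda>x. x)"
      by (intro distr_cong) (auto simp: space_PiM PiE_def extensional_def restrict_def fun_eq_iff)
    also have "\<dots> = PiM {..<L} (\<lambda>_. M)" by (rule distr_id)
    also have "\<dots> = PiM {..<L} (\<lambda>i. distr (PiM {..<L} (\<lambda>_. M)) M (\<lambda>S. S i))"
      by (intro PiM_cong refl distr_PiM_component[symmetric]) (use M in auto)
    finally show "distr (PiM {..<L} (\<lambda>_. M)) (PiM {..<L} (\<lambda>_. M)) (\<lambda>x. \<lambda>i\<in>{..<L}. x i) =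
        PiM {..<L} (\<lambda>i. distr (PiM {..<L} (\<lambda>_. M)) M (\<lambda>S. S i))" .
  qed
qed

lemma Hoeffding_PiM_iid:
  fixes M :: "'a measure" and f :: "'a \<Rightarrow> real"
  assumes M: "prob_space M" and f[measurable]: "f \<in> borel_measurable M"
    and f_bnd: "\<forall>s\<in>space M. 0 \<le> f s \<and> f s \<le> B" and B: "B > 0" and L: "L > (0::nat)" and t: "t \<ge> 0"
  shows "measure (PiM {..<L} (\<lambda>_. M)) {S \<in> space (PiM {..<L} (\<lambda>_. M)).
            t \<le> \<bar>(\<Sum>l<L. f (S l)) / real L - (\<integral>s. f s \<partial>M)\<bar>} \<le> 2 * exp (-2 * real L * t\<^sup>2 / B\<^sup>2)"
proof -
  let ?P = "PiM {..<L} (\<lambda>_. M)"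
  interpret P: prob_space ?P
    by (intro prob_space_PiM) (use M in auto)
  have component_law: "distr ?P M (\<lambda>S. S l) = M" if "l < L" for l
    by (rule distr_PiM_component) (use M that in auto)
  have same_law: "distr ?P borel (\<lambda>S. f (S l)) = distr M borel f" if "l < L" for l
    using component_law[OF that] distr_distr[of f M borel "\<lambda>S. S l" ?P] that
    by (simp add: comp_def)
  have H: "Hoeffding_ineq_iid ?P {..<L} (\<lambda>l S. f (S l)) (\<lambda>S. f (S 0)) 0 B"
    unfolding Hoeffding_ineq_iid_def
  proof unfold_locales
    show "P.indep_vars (\<lambda>_. borel) (\<lambda>l S. f (S l)) {..<L}"
      by (rule P.indep_vars_compose2[OF indep_vars_PiM_components[OF M L]]) (use f in auto)
    show "distr ?P borel (\<lambda>S. f (S l)) = distr ?P borel (\<lambda>S. f (S 0))" if "l \<in> {..<L}" for l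
      using same_law[of l] same_law[of 0] that L by auto
    show "(\<lambda>S. f (S 0)) \<in> borel_measurable ?P"
      using L measurable_compose[OF measurable_component_singleton[of 0 "{..<L}" "\<lambda>_. M"] f] by simp
    show "AE S in ?P. f (S 0) \<in> {0..B}"
      by (rule AE_PiM_component[where P="\<lambda>s. f s \<in> {0..B}"]) (use M L f_bnd in \<open>auto intro!: AE_I2\<close>)
  qed simp
  have "P.expectation (\<lambda>S. f (S 0)) = (\<integral>s. f s \<partial>M)"
    using integral_distr[of "\<lambda>S. S 0" ?P M f] component_law[of 0] L by simp
  moreover have "{..<L} \<noteq> {}" using L by auto
  ultimately show ?thesis using Hoeffding_ineq_iid.Hoeffding_ineq_abs_ge'[OF H t] B L by simp
qed

lemma sample_deviation_event_measurable:
  fixes M :: "'a measure" and f :: "'a \<Rightarrow> real"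
  assumes f: "f \<in> borel_measurable M"
  shows "{S \<in> space (PiM {..<L} (\<lambda>_. M)). t \<le> \<bar>(\<Sum>l<L. f (S l)) / real L - c\<bar>}
           \<in> sets (PiM {..<L} (\<lambda>_. M))"
proof -
  have [measurable]: "(\<lambda>S. f (S l)) \<in> borel_measurable (PiM {..<L} (\<lambda>_. M))" if "l < L" for l
    using measurable_compose[OF measurable_component_singleton[of l "{..<L}" "\<lambda>_. M"] f] that by simp
  show ?thesis by measurable
qed

lemma integral_abs_diff_le:
  fixes M :: "'a measure" and f g :: "'a \<Rightarrow> real"
  assumes M: "prob_space M" and f: "f \<in> borel_measurable M" and g: "g \<in> borel_measurable M"
    and bnd: "\<forall>s\<in>space M. \<bar>f s\<bar> \<le> B \<and> \<bar>g s\<bar> \<le> B" and close: "\<forall>s\<in>space M. \<bar>f s - g s\<bar> \<le> r"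
  shows "\<bar>(\<integral>s. f s \<partial>M) - (\<integral>s. g s \<partial>M)\<bar> \<le> r"
proof -
  interpret prob_space M by (rule M)
  have fi: "integrable M f" and gi: "integrable M g"
    by (rule integrable_const_bound[where B=B]; use bnd f g in \<open>auto intro!: AE_I2\<close>)+
  have "\<bar>\<integral>s. f s - g s \<partial>M\<bar> \<le> r"
    using integral_abs_bound[of M "\<lambda>s. f s - g s"] integral_le_const[of "\<lambda>s. \<bar>f s - g s\<bar>" r]
      fi gi close by (force intro!: AE_I2)
  then show ?thesis by (simp add: Bochner_Integration.integral_diff[OF fi gi])
qed

lemma sum_unit_interval_bounds:
  fixes f :: "'i::finite \<Rightarrow> real"
  assumes "\<forall>i. 0 \<le> f i \<and> f i \<le> 1"
  shows "0 \<le> (\<Sum>i\<in>UNIV. f i) \<and> (\<Sum>i\<in>UNIV. f i) \<le> real CARD('i)"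
proof
  show "0 \<le> (\<Sum>i\<in>UNIV. f i)" using assms by (intro sum_nonneg) blast
  have "(\<Sum>i\<in>UNIV. f i) \<le> (\<Sum>i\<in>(UNIV::'i set). 1)" using assms by (intro sum_mono) blast
  then show "(\<Sum>i\<in>UNIV. f i) \<le> real CARD('i)" by simp
qed

lemma abs_sum_diff_le:
  fixes a b :: "'i \<Rightarrow> real"
  shows "\<bar>(\<Sum>i\<in>A. a i) - (\<Sum>i\<in>A. b i)\<bar> \<le> (\<Sum>i\<in>A. \<bar>a i - b i\<bar>)"
  by (metis sum_subtractf sum_abs)

lemma average_abs_diff_le:
  fixes a b :: "nat \<Rightarrow> real"
  assumes "\<forall>l<L. \<bar>a l - b l\<bar> \<le> r" and "L > 0"
  shows "\<bar>(\<Sum>l<L. a l) / real L - (\<Sum>l<L. b l) / real L\<bar> \<le> r"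
proof -
  have "\<bar>(\<Sum>l<L. a l) - (\<Sum>l<L. b l)\<bar> \<le> (\<Sum>l<L. \<bar>a l - b l\<bar>)"
    by (rule abs_sum_diff_le)
  also have "\<dots> \<le> real L * r"
    using sum_mono[of "{..<L}" "\<lambda>l. \<bar>a l - b l\<bar>" "\<lambda>_. r"] assms(1) by simp
  finally show ?thesis
    using assms(2) by (simp add: diff_divide_distrib[symmetric] divide_simps mult.commute)
qed

lemma uniform_deviation_via_cover:
  fixes M :: "'a measure" and f :: "'w \<Rightarrow> 'a \<Rightarrow> real"
  assumes M: "prob_space M" and L: "L > 0" and B: "B > 0" and t: "t \<ge> 0"
    and f_meas: "\<forall>w\<in>\<Omega>. f w \<in> borel_measurable M"
    and f_bnd: "\<forall>w\<in>\<Omega>. \<forall>s\<in>space M. 0 \<le> f w s \<and> f w s \<le> B"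
    and C: "finite C" "C \<subseteq> \<Omega>"
    and cover: "\<forall>w\<in>\<Omega>. \<exists>c\<in>C. \<forall>s\<in>space M. \<bar>f w s - f c s\<bar> \<le> r"
  shows "\<exists>Bad \<in> sets (PiM {..<L} (\<lambda>_. M)).
           measure (PiM {..<L} (\<lambda>_. M)) Bad \<le> real (card C) * (2 * exp (-2 * real L * t\<^sup>2 / B\<^sup>2)) \<and>
           (\<forall>S \<in> space (PiM {..<L} (\<lambda>_. M)) - Bad. \<forall>w\<in>\<Omega>.
              \<bar>(\<integral>s. f w s \<partial>M) - (\<Sum>l<L. f w (S l)) / real L\<bar> \<le> t + 2 * r)"
proof -
  let ?P = "PiM {..<L} (\<lambda>_. M)"
  interpret P: prob_space ?P by (intro prob_space_PiM) (use M in auto)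
  define dev where "dev c = {S \<in> space ?P. t \<le> \<bar>(\<Sum>l<L. f c (S l)) / real L - (\<integral>s. f c s \<partial>M)\<bar>}" for c
  have dev_sets: "dev c \<in> sets ?P" if "c \<in> C" for c
    unfolding dev_def using sample_deviation_event_measurable f_meas C that by blast
  have "measure ?P (\<Union>c\<in>C. dev c) \<le> (\<Sum>c\<in>C. measure ?P (dev c))"
    by (rule P.finite_measure_subadditive_finite) (use C dev_sets in auto)
  also have "\<dots> \<le> (\<Sum>c\<in>C. 2 * exp (-2 * real L * t\<^sup>2 / B\<^sup>2))"
    unfolding dev_def using Hoeffding_PiM_iid[OF M _ _ B L t] f_meas f_bnd C
    by (intro sum_mono) (auto simp del: mult_minus_left)
  finally have Bad_prob: "measure ?P (\<Union>c\<in>C. dev c) \<le> real (card C) * (2 * exp (-2 * real L * t\<^sup>2 / B\<^sup>2))"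
    by simp
  have good: "\<bar>(\<integral>s. f w s \<partial>M) - (\<Sum>l<L. f w (S l)) / real L\<bar> \<le> t + 2 * r"
    if S: "S \<in> space ?P - (\<Union>c\<in>C. dev c)" and w: "w \<in> \<Omega>" for S w
  proof -
    obtain c where c: "c \<in> C" "\<forall>s\<in>space M. \<bar>f w s - f c s\<bar> \<le> r" using cover w by blast
    have Sl: "S l \<in> space M" if "l < L" for l
      using S that by (auto simp: space_PiM PiE_def Pi_def)
    have "\<bar>(\<integral>s. f w s \<partial>M) - (\<integral>s. f c s \<partial>M)\<bar> \<le> r"
      by (rule integral_abs_diff_le[OF M, where B=B]) (use f_meas f_bnd w c C in fastforce)+
    moreover have "\<bar>(\<Sum>l<L. f c (S l)) / real L - (\<integral>s. f c s \<partial>M)\<bar> < t"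
      using S c(1) unfolding dev_def by auto
    moreover have "\<bar>(\<Sum>l<L. f w (S l)) / real L - (\<Sum>l<L. f c (S l)) / real L\<bar> \<le> r"
      by (rule average_abs_diff_le) (use c Sl L in auto)
    ultimately show ?thesis by linarith
  qed
  show ?thesis
    using dev_sets C Bad_prob good by (intro bexI[of _ "\<Union>c\<in>C. dev c"]) auto
qed

lemma minimal_cover_of_image:
  assumes "\<exists>C. is_cover d (h ` \<Omega>) r C"
  obtains C where "finite C" "C \<subseteq> \<Omega>" "card C \<le> covering_number d (h ` \<Omega>) r"
    "\<forall>w\<in>\<Omega>. \<exists>c\<in>C. d (h c) (h w) < ereal r"
proof -
  obtain D where D: "is_cover d (h ` \<Omega>) r D" "card D = covering_number d (h ` \<Omega>) r"
    using assms LeastI_ex[of "\<lambda>k. \<exists>C. is_cover d (h ` \<Omega>) r C \<and> card C = k"]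
    unfolding covering_number_def by blast
  have D_sub: "D \<subseteq> h ` \<Omega>" and D_fin: "finite D" using D(1) unfolding is_cover_def by auto
  let ?C = "inv_into \<Omega> h ` D"
  have "?C \<subseteq> \<Omega>" using D_sub by (blast intro: inv_into_into)
  moreover have "card ?C \<le> covering_number d (h ` \<Omega>) r"
    using card_image_le[OF D_fin, of "inv_into \<Omega> h"] unfolding D(2) .
  moreover have "\<forall>w\<in>\<Omega>. \<exists>c\<in>?C. d (h c) (h w) < ereal r"
  proof
    fix w assume "w \<in> \<Omega>"
    then obtain c where c: "c \<in> D" "d c (h w) < ereal r"
      using D(1) unfolding is_cover_def by blast
    moreover have "h (inv_into \<Omega> h c) = c" using D_sub c(1) by (blast intro: f_inv_into_f)
    ultimately show "\<exists>c\<in>?C. d (h c) (h w) < ereal r" by (intro bexI[of _ "inv_into \<Omega> h c"]) simp_all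
  qed
  ultimately show thesis using D_fin that[of ?C] by simp
qed

lemma union_bound_from_sample_size:
  fixes n \<delta> \<epsilon> Y :: real and L N :: nat
  assumes "0 < \<delta>" "L > 0" "n > 0"
    and \<epsilon>: "\<epsilon> \<ge> sqrt (9 * n\<^sup>2 / (2 * real L) * Y)" and Y: "Y \<ge> ln (4 / \<delta>) + ln (real N)"
  shows "real N * (2 * exp (-2 * real L * (\<epsilon> / 3)\<^sup>2 / n\<^sup>2)) \<le> \<delta> / 2"
proof (cases "N = 0")
  case False
  define K where "K = 2 * real L * (\<epsilon> / 3)\<^sup>2 / n\<^sup>2"
  have "9 * n\<^sup>2 / (2 * real L) * Y \<le> \<epsilon>\<^sup>2"
    using \<epsilon> by (smt (verit) real_le_rsqrt sqrt_le_D zero_le_power2)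
  then have "Y \<le> K"
    using assms(2,3) unfolding K_def by (simp add: field_simps power2_eq_square)
  then have "exp (- K) \<le> exp (- (ln (4 / \<delta>) + ln (real N)))" using Y by simp
  also have "\<dots> = \<delta> / (4 * real N)"
    using False assms(1) by (simp add: exp_diff exp_minus field_simps)
  finally show ?thesis
    using False unfolding K_def by (simp add: field_simps)
qed (use assms in simp)

lemma uniform_deviation_from_covering_number:
  fixes M :: "'a measure" and f :: "'w \<Rightarrow> 'a \<Rightarrow> real" and h :: "'w \<Rightarrow> 'f"
  assumes M: "prob_space M" and L: "L > 0" and B: "B > 0"
    and f_meas: "\<forall>w\<in>\<Omega>. f w \<in> borel_measurable M"
    and f_bnd: "\<forall>w\<in>\<Omega>. \<forall>s\<in>space M. 0 \<le> f w s \<and> f w s \<le> B"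
    and cover: "\<exists>C. is_cover d (h ` \<Omega>) r C"
    and close: "\<forall>w\<in>\<Omega>. \<forall>c\<in>\<Omega>. d (h c) (h w) < ereal r \<longrightarrow> (\<forall>s\<in>space M. \<bar>f w s - f c s\<bar> \<le> \<rho>)"
    and \<delta>: "\<delta> > 0" and \<epsilon>: "\<epsilon> > 0" "\<epsilon> \<ge> sqrt (9 * B\<^sup>2 / (2 * real L) * Y)"
    and Y: "Y \<ge> ln (4 / \<delta>) + ln (real (covering_number d (h ` \<Omega>) r))"
  shows "\<exists>Bad \<in> sets (PiM {..<L} (\<lambda>_. M)). measure (PiM {..<L} (\<lambda>_. M)) Bad \<le> \<delta> / 2 \<and>
           (\<forall>S \<in> space (PiM {..<L} (\<lambda>_. M)) - Bad. \<forall>w\<in>\<Omega>.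
              \<bar>(\<integral>s. f w s \<partial>M) - (\<Sum>l<L. f w (S l)) / real L\<bar> \<le> \<epsilon> / 3 + 2 * \<rho>)"
proof -
  obtain C where C: "finite C" "C \<subseteq> \<Omega>" "card C \<le> covering_number d (h ` \<Omega>) r"
      "\<forall>w\<in>\<Omega>. \<exists>c\<in>C. d (h c) (h w) < ereal r"
    using cover by (rule minimal_cover_of_image)
  have "\<forall>w\<in>\<Omega>. \<exists>c\<in>C. \<forall>s\<in>space M. \<bar>f w s - f c s\<bar> \<le> \<rho>"
    using C(2,4) close by blast
  moreover define e where "e = 2 * exp (-2 * real L * (\<epsilon> / 3)\<^sup>2 / B\<^sup>2)"
  ultimately obtain Bad where Bad: "Bad \<in> sets (PiM {..<L} (\<lambda>_. M))"
      "measure (PiM {..<L} (\<lambda>_. M)) Bad \<le> real (card C) * e"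
      "\<forall>S \<in> space (PiM {..<L} (\<lambda>_. M)) - Bad. \<forall>w\<in>\<Omega>.
         \<bar>(\<integral>s. f w s \<partial>M) - (\<Sum>l<L. f w (S l)) / real L\<bar> \<le> \<epsilon> / 3 + 2 * \<rho>"
    using uniform_deviation_via_cover[OF M L B _ f_meas f_bnd C(1,2), of "\<epsilon> / 3" \<rho>] \<epsilon>(1)
    unfolding e_def by force
  have "real (covering_number d (h ` \<Omega>) r) * e \<le> \<delta> / 2"
    unfolding e_def by (rule union_bound_from_sample_size[OF \<delta> L B \<epsilon>(2) Y])
  moreover have "real (card C) * e \<le> real (covering_number d (h ` \<Omega>) r) * e"
    using C(3) unfolding e_def by (intro mult_right_mono) simp_all
  ultimately show ?thesis using Bad by (intro bexI[of _ Bad]) auto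
qed

lemma abs_diff_of_maxima_le:
  fixes f g :: "'b \<Rightarrow> real"
  assumes "b \<in> B" "b' \<in> B" "\<forall>c\<in>B. f c \<le> f b" "\<forall>c\<in>B. g c \<le> g b'"
  shows "\<exists>d\<in>{b, b'}. \<bar>f b - g b'\<bar> \<le> \<bar>f d - g d\<bar>"
  using assms by (cases "g b' \<le> f b") (fastforce simp: abs_if)+

lemma dist_util_upper:
  assumes "v \<in> mat_dom V" "v' \<in> mat_dom V"
  shows "ereal (\<Sum>i\<in>UNIV. \<bar>u i (v i) (v(i := v' i)) x y - u' i (v i) (v(i := v' i)) x y\<bar>)
           \<le> dist_util V u u'"
  unfolding dist_util_def by (rule SUP_upper2[of "(v, v', x, y)"]) (use assms in auto)

lemma sum_diff_le_dist_pay: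
  assumes "v \<in> mat_dom V" "dist_pay V q q' < ereal r"
  shows "\<bar>(\<Sum>i\<in>UNIV. q v x y i) - (\<Sum>i\<in>UNIV. q' v x y i)\<bar> \<le> r"
proof -
  have "ereal (\<Sum>i\<in>UNIV. \<bar>q v x y i - q' v x y i\<bar>) \<le> dist_pay V q q'"
    unfolding dist_pay_def by (rule SUP_upper2[of "(v, x, y)"]) (use assms in auto)
  from le_less_trans[OF this assms(2)] have "(\<Sum>i\<in>UNIV. \<bar>q v x y i - q' v x y i\<bar>) \<le> r" by simp
  then show ?thesis using abs_sum_diff_le[where a="\<lambda>i. q v x y i" and b="\<lambda>i. q' v x y i" and A=UNIV] by linarith
qed

locale ir_mechanism_family =
  fixes V :: "real set" and \<Omega> :: "'w set"
    and g :: "'w \<Rightarrow> ('n::finite \<Rightarrow> 'm::finite \<Rightarrow> real) \<Rightarrow> ('n \<Rightarrow> 'x) \<Rightarrow> ('m \<Rightarrow> 'y) \<Rightarrow> 'n \<Rightarrow> 'm \<Rightarrow> real"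
    and p :: "'w \<Rightarrow> ('n \<Rightarrow> 'm \<Rightarrow> real) \<Rightarrow> ('n \<Rightarrow> 'x) \<Rightarrow> ('m \<Rightarrow> 'y) \<Rightarrow> 'n \<Rightarrow> real"
  assumes V_nonneg: "V \<subseteq> {0..}"
    and g_range: "\<forall>w\<in>\<Omega>. \<forall>b\<in>mat_dom V. \<forall>x y i j. 0 \<le> g w b x y i j \<and> g w b x y i j \<le> 1"
    and p_nonneg: "\<forall>w\<in>\<Omega>. \<forall>b\<in>mat_dom V. \<forall>x y i. 0 \<le> p w b x y i"
    and p_IR: "\<forall>w\<in>\<Omega>. \<forall>b\<in>mat_dom V. \<forall>x y i. p w b x y i \<le> (\<Sum>j\<in>UNIV. g w b x y i j * b i j)"
    and max_attained: "\<forall>w\<in>\<Omega>. \<forall>v\<in>mat_dom V. \<forall>x y i. \<exists>b'\<in>row_dom V. \<forall>b''\<in>row_dom V.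
           util g p w i (v i) (v(i := b'')) x y \<le> util g p w i (v i) (v(i := b')) x y"
begin

lemma allocated_value_le_total:
  assumes "w \<in> \<Omega>" "v \<in> mat_dom V" "b \<in> mat_dom V"
  shows "(\<Sum>j\<in>UNIV. g w b x y i j * v i j) \<le> (\<Sum>j\<in>UNIV. v i j)"
proof (rule sum_mono)
  fix j
  have "v i j \<in> V" using assms(2) unfolding mat_dom_def by blast
  then have "0 \<le> v i j" using V_nonneg by auto
  moreover have "0 \<le> g w b x y i j \<and> g w b x y i j \<le> 1" using g_range assms(1,3) by blast
  ultimately show "g w b x y i j * v i j \<le> v i j" by (intro mult_left_le_one_le) auto
qed

lemma payment_bounds:
  assumes "w \<in> \<Omega>" "v \<in> mat_dom V" "(\<Sum>j\<in>UNIV. v i j) \<le> 1"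
  shows "0 \<le> p w v x y i \<and> p w v x y i \<le> 1"
proof
  show "0 \<le> p w v x y i" using p_nonneg assms(1,2) by blast
  have "p w v x y i \<le> (\<Sum>j\<in>UNIV. g w v x y i j * v i j)" using p_IR assms(1,2) by blast
  then show "p w v x y i \<le> 1"
    using allocated_value_le_total[OF assms(1,2,2), of x y i] assms(3) by linarith
qed

lemma util_le_one:
  assumes "w \<in> \<Omega>" "v \<in> mat_dom V" "b \<in> mat_dom V" "(\<Sum>j\<in>UNIV. v i j) \<le> 1"
  shows "util g p w i (v i) b x y \<le> 1"
proof -
  have "0 \<le> p w b x y i" using p_nonneg assms by blast
  then show ?thesis
    using allocated_value_le_total[OF assms(1-3), of x y i] assms(4) unfolding util_def by linarith
qed

lemma regret_attained:
  assumes "w \<in> \<Omega>" "v \<in> mat_dom V"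
  obtains b where "b \<in> row_dom V"
    "\<forall>b'\<in>row_dom V. util g p w i (v i) (v(i := b')) x y \<le> util g p w i (v i) (v(i := b)) x y"
    "regret V g p w i v x y = util g p w i (v i) (v(i := b)) x y - util g p w i (v i) v x y"
proof -
  obtain b where b: "b \<in> row_dom V"
    "\<forall>b'\<in>row_dom V. util g p w i (v i) (v(i := b')) x y \<le> util g p w i (v i) (v(i := b)) x y"
    using max_attained assms by blast
  then have "(SUP b'\<in>row_dom V. util g p w i (v i) (v(i := b')) x y) = util g p w i (v i) (v(i := b)) x y"
    by (intro cSup_eq_maximum) auto
  with b that show thesis unfolding regret_def by auto
qed

lemma regret_bounds:
  assumes w: "w \<in> \<Omega>" and v: "v \<in> mat_dom V" "(\<Sum>j\<in>UNIV. v i j) \<le> 1"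
  shows "0 \<le> regret V g p w i v x y \<and> regret V g p w i v x y \<le> 1"
proof -
  obtain b where b: "b \<in> row_dom V"
    "\<forall>b'\<in>row_dom V. util g p w i (v i) (v(i := b')) x y \<le> util g p w i (v i) (v(i := b)) x y"
    "regret V g p w i v x y = util g p w i (v i) (v(i := b)) x y - util g p w i (v i) v x y"
    using regret_attained[OF w v(1)] by blast
  have "v i \<in> row_dom V" and upd: "v(i := b) \<in> mat_dom V"
    using v b(1) unfolding mat_dom_def row_dom_def by auto
  then have "util g p w i (v i) v x y \<le> util g p w i (v i) (v(i := b)) x y"
    using b(2) by fastforce
  moreover have "util g p w i (v i) (v(i := b)) x y \<le> 1" by (rule util_le_one[OF w v(1) upd v(2)])
  moreover have "0 \<le> util g p w i (v i) v x y"
    using p_IR w v(1) unfolding util_def by force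
  ultimately show ?thesis using b(3) by linarith
qed

lemma sum_regret_diff_le:
  assumes w: "w \<in> \<Omega>" "w' \<in> \<Omega>" and v: "v \<in> mat_dom V"
    and close: "dist_util V (util g p w') (util g p w) < ereal r"
  shows "\<bar>(\<Sum>i\<in>UNIV. regret V g p w i v x y) - (\<Sum>i\<in>UNIV. regret V g p w' i v x y)\<bar> \<le> 2 * r"
proof -
  let ?U = "\<lambda>w i b. util g p w i (v i) (v(i := b)) x y"
  let ?D = "\<lambda>d i. \<bar>?U w' i (d i) - ?U w i (d i)\<bar>"
  have small: "(\<Sum>i\<in>UNIV. ?D d i) < r" if "d \<in> mat_dom V" for d
    using le_less_trans[OF dist_util_upper[OF v that] close] by simp
  have "\<exists>d\<in>row_dom V. \<bar>regret V g p w i v x y - regret V g p w' i v x y\<bar> \<le> ?D (\<lambda>_. d) i + ?D v i" for i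
  proof -
    obtain b where b: "b \<in> row_dom V" "\<forall>c\<in>row_dom V. ?U w i c \<le> ?U w i b"
      "regret V g p w i v x y = ?U w i b - util g p w i (v i) v x y"
      using regret_attained[OF w(1) v] by blast
    obtain b' where b': "b' \<in> row_dom V" "\<forall>c\<in>row_dom V. ?U w' i c \<le> ?U w' i b'"
      "regret V g p w' i v x y = ?U w' i b' - util g p w' i (v i) v x y"
      using regret_attained[OF w(2) v] by blast
    obtain d where "d \<in> {b, b'}" "\<bar>?U w i b - ?U w' i b'\<bar> \<le> \<bar>?U w i d - ?U w' i d\<bar>"
      using abs_diff_of_maxima_le[OF b(1) b'(1) b(2) b'(2)] by blast
    with b b' show ?thesis by (intro bexI[of _ d]) auto
  qed
  then obtain d where d: "\<And>i. d i \<in> row_dom V"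
    "\<And>i. \<bar>regret V g p w i v x y - regret V g p w' i v x y\<bar> \<le> ?D d i + ?D v i"
    by metis
  have "d \<in> mat_dom V" using d(1) unfolding mat_dom_def row_dom_def by auto
  have "\<bar>(\<Sum>i\<in>UNIV. regret V g p w i v x y) - (\<Sum>i\<in>UNIV. regret V g p w' i v x y)\<bar>
      \<le> (\<Sum>i\<in>UNIV. \<bar>regret V g p w i v x y - regret V g p w' i v x y\<bar>)"
    by (rule abs_sum_diff_le)
  also have "\<dots> \<le> (\<Sum>i\<in>UNIV. ?D d i) + (\<Sum>i\<in>UNIV. ?D v i)"
    using sum_mono[OF d(2)] by (simp add: sum.distrib)
  also have "\<dots> \<le> 2 * r" using small[OF \<open>d \<in> mat_dom V\<close>] small[OF v] by linarith
  finally show ?thesis .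
qed

end

theorem theorem4:
  fixes M :: "(('n::finite \<Rightarrow> 'm::finite \<Rightarrow> real) \<times> ('n \<Rightarrow> 'x) \<times> ('m \<Rightarrow> 'y)) measure"
    and V :: "real set"
    and \<Omega> :: "'w set"
    and g :: "'w \<Rightarrow> ('n \<Rightarrow> 'm \<Rightarrow> real) \<Rightarrow> ('n \<Rightarrow> 'x) \<Rightarrow> ('m \<Rightarrow> 'y) \<Rightarrow> 'n \<Rightarrow> 'm \<Rightarrow> real"
    and p :: "'w \<Rightarrow> ('n \<Rightarrow> 'm \<Rightarrow> real) \<Rightarrow> ('n \<Rightarrow> 'x) \<Rightarrow> ('m \<Rightarrow> 'y) \<Rightarrow> 'n \<Rightarrow> real"
    and L :: nat and \<delta> \<epsilon> :: real
  defines "Pcls \<equiv> (\<lambda>w. p w) ` \<Omega>"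
    and "Ucls \<equiv> (\<lambda>w. \<lambda>i vi b x y. util g p w i vi b x y) ` \<Omega>"
  assumes M: "prob_space M"
    and V_nonneg: "V \<subseteq> {0..}"
    and g_range: "\<forall>w\<in>\<Omega>. \<forall>b\<in>mat_dom V. \<forall>x y i j. 0 \<le> g w b x y i j \<and> g w b x y i j \<le> 1"
    and g_sum: "\<forall>w\<in>\<Omega>. \<forall>b\<in>mat_dom V. \<forall>x y j. (\<Sum>i\<in>UNIV. g w b x y i j) \<le> 1"
    and p_nonneg: "\<forall>w\<in>\<Omega>. \<forall>b\<in>mat_dom V. \<forall>x y i. 0 \<le> p w b x y i"
    and p_IR: "\<forall>w\<in>\<Omega>. \<forall>b\<in>mat_dom V. \<forall>x y i. p w b x y i \<le> (\<Sum>j\<in>UNIV. g w b x y i j * b i j)"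
    and max_attained: "\<forall>w\<in>\<Omega>. \<forall>v\<in>mat_dom V. \<forall>x y i. \<exists>b'\<in>row_dom V. \<forall>b''\<in>row_dom V.
           util g p w i (v i) (v(i := b'')) x y \<le> util g p w i (v i) (v(i := b')) x y"
    and support: "\<forall>s\<in>space M. fst s \<in> mat_dom V \<and>
           (\<forall>i. \<forall>S. (\<Sum>j\<in>S. fst s i j) \<le> 1)"
    and meas_p: "\<forall>w\<in>\<Omega>. \<forall>i. (\<lambda>(v, x, y). p w v x y i) \<in> borel_measurable M"
    and meas_reg: "\<forall>w\<in>\<Omega>. \<forall>i. (\<lambda>(v, x, y). regret V g p w i v x y) \<in> borel_measurable M"
    and L_pos: "L > 0"
    and \<delta>: "0 < \<delta>" "\<delta> < 1"
    and \<epsilon>_pos: "\<epsilon> > 0"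
    and cover_P_fin: "\<exists>C. is_cover (dist_pay V) Pcls (\<epsilon> / 3) C"
    and cover_U_fin: "\<exists>C. is_cover (dist_util V) Ucls (\<epsilon> / 6) C"
    and \<epsilon>_bound: "\<epsilon> \<ge> sqrt ((9 * real (CARD('n))^2 / (2 * real L)) *
           (ln (4 / \<delta>) + max (ln (real (covering_number (dist_pay V) Pcls (\<epsilon> / 3))))
                                 (ln (real (covering_number (dist_util V) Ucls (\<epsilon> / 6))))))"
  shows "\<exists>A \<in> sets (PiM {..<L} (\<lambda>_. M)).
           measure (PiM {..<L} (\<lambda>_. M)) A \<ge> 1 - \<delta> \<and>
           (\<forall>S\<in>A. \<forall>w\<in>\<Omega>.
              \<bar>(\<integral>s. (\<Sum>i\<in>UNIV. p w (fst s) (fst (snd s)) (snd (snd s)) i) \<partial>M)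
                - (1 / real L) * (\<Sum>l<L. \<Sum>i\<in>UNIV. p w (fst (S l)) (fst (snd (S l))) (snd (snd (S l))) i)\<bar> \<le> \<epsilon>
            \<and> \<bar>(\<integral>s. (\<Sum>i\<in>UNIV. regret V g p w i (fst s) (fst (snd s)) (snd (snd s))) \<partial>M)
                - (\<Sum>i\<in>UNIV. (1 / real L) * (\<Sum>l<L. regret V g p w i (fst (S l)) (fst (snd (S l))) (snd (snd (S l)))))\<bar> \<le> \<epsilon>)"
proof -
  interpret ir_mechanism_family V \<Omega> g p
    using V_nonneg g_range p_nonneg p_IR max_attained by unfold_locales
  let ?P = "PiM {..<L} (\<lambda>_. M)"
  interpret P: prob_space ?P by (intro prob_space_PiM) (use M in auto)
  define Fp where "Fp w s = (\<Sum>i\<in>UNIV. p w (fst s) (fst (snd s)) (snd (snd s)) i)" for w s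
  define Fr where "Fr w s = (\<Sum>i\<in>UNIV. regret V g p w i (fst s) (fst (snd s)) (snd (snd s)))" for w s
  have sp: "fst s \<in> mat_dom V" "\<forall>i. (\<Sum>j\<in>UNIV. fst s i j) \<le> 1" if "s \<in> space M" for s
    using support that by auto
  have Fp_meas: "\<forall>w\<in>\<Omega>. Fp w \<in> borel_measurable M" and Fr_meas: "\<forall>w\<in>\<Omega>. Fr w \<in> borel_measurable M"
    using meas_p meas_reg unfolding Fp_def Fr_def case_prod_beta by (auto intro!: borel_measurable_sum)
  have Fp_bnd: "\<forall>w\<in>\<Omega>. \<forall>s\<in>space M. 0 \<le> Fp w s \<and> Fp w s \<le> real CARD('n)"
    unfolding Fp_def by (intro ballI sum_unit_interval_bounds allI payment_bounds) (use sp in auto)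
  have Fr_bnd: "\<forall>w\<in>\<Omega>. \<forall>s\<in>space M. 0 \<le> Fr w s \<and> Fr w s \<le> real CARD('n)"
    unfolding Fr_def by (intro ballI sum_unit_interval_bounds allI regret_bounds) (use sp in auto)
  have "\<forall>w\<in>\<Omega>. \<forall>c\<in>\<Omega>. dist_pay V (p c) (p w) < ereal (\<epsilon> / 3) \<longrightarrow>
          (\<forall>s\<in>space M. \<bar>Fp w s - Fp c s\<bar> \<le> \<epsilon> / 3)"
  proof (intro ballI impI)
    fix w c s assume "dist_pay V (p c) (p w) < ereal (\<epsilon> / 3)" "s \<in> space M"
    from sum_diff_le_dist_pay[OF sp(1)[OF this(2)] this(1)]
    show "\<bar>Fp w s - Fp c s\<bar> \<le> \<epsilon> / 3" unfolding Fp_def by (simp add: abs_minus_commute)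
  qed
  from uniform_deviation_from_covering_number[OF M L_pos _ Fp_meas Fp_bnd
      cover_P_fin[unfolded Pcls_def] this \<delta>(1) \<epsilon>_pos \<epsilon>_bound[unfolded Pcls_def Ucls_def]
      add_left_mono[OF max.cobounded1]]
  obtain BadP where BadP: "BadP \<in> sets ?P" "measure ?P BadP \<le> \<delta> / 2"
    "\<forall>S\<in>space ?P - BadP. \<forall>w\<in>\<Omega>. \<bar>(\<integral>s. Fp w s \<partial>M) - (\<Sum>l<L. Fp w (S l)) / real L\<bar> \<le> \<epsilon>"
    by auto
  have "\<forall>w\<in>\<Omega>. \<forall>c\<in>\<Omega>. dist_util V (util g p c) (util g p w) < ereal (\<epsilon> / 6) \<longrightarrow>
          (\<forall>s\<in>space M. \<bar>Fr w s - Fr c s\<bar> \<le> \<epsilon> / 3)"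
  proof (intro ballI impI)
    fix w c s assume "w \<in> \<Omega>" "c \<in> \<Omega>" "dist_util V (util g p c) (util g p w) < ereal (\<epsilon> / 6)"
      "s \<in> space M"
    from sum_regret_diff_le[OF this(1,2) sp(1)[OF this(4)] this(3)]
    show "\<bar>Fr w s - Fr c s\<bar> \<le> \<epsilon> / 3" unfolding Fr_def by simp
  qed
  from uniform_deviation_from_covering_number[OF M L_pos _ Fr_meas Fr_bnd
      cover_U_fin[unfolded Ucls_def] this \<delta>(1) \<epsilon>_pos \<epsilon>_bound[unfolded Pcls_def Ucls_def]
      add_left_mono[OF max.cobounded2]]
  obtain BadU where BadU: "BadU \<in> sets ?P" "measure ?P BadU \<le> \<delta> / 2"
    "\<forall>S\<in>space ?P - BadU. \<forall>w\<in>\<Omega>. \<bar>(\<integral>s. Fr w s \<partial>M) - (\<Sum>l<L. Fr w (S l)) / real L\<bar> \<le> \<epsilon>"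
    by auto
  have "measure ?P (space ?P - (BadP \<union> BadU)) \<ge> 1 - \<delta>"
    using BadP(1,2) BadU(1,2) P.prob_compl[of "BadP \<union> BadU"] measure_Un_le[of BadP ?P BadU] by simp
  moreover have "(\<Sum>i\<in>UNIV. 1 / real L * (\<Sum>l<L. regret V g p w i (fst (S l)) (fst (snd (S l))) (snd (snd (S l)))))
      = (\<Sum>l<L. Fr w (S l)) / real L" for w S
    unfolding Fr_def by (simp add: sum_divide_distrib[symmetric] sum.swap[of _ UNIV])
  moreover have "(\<integral>s. (\<Sum>i\<in>UNIV. regret V g p w i (fst s) (fst (snd s)) (snd (snd s))) \<partial>M)
      = (\<integral>s. Fr w s \<partial>M)" for w
    unfolding Fr_def ..
  moreover have "space ?P - (BadP \<union> BadU) \<in> sets ?P" using BadP(1) BadU(1) by auto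
  ultimately show ?thesis
    using BadP(3) BadU(3) unfolding Fp_def by (intro bexI[of _ "space ?P - (BadP \<union> BadU)"]) auto
qed

end
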